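(* Let $\Sigma$ be a finite alphabet. A regular language $L \subseteq \Sigma^*$ belongs to $\mathsf{F}(\mathcal{O}(1))$ if and only if $L$ is a finite Boolean combination of suffix testable languages and regular length languages.
   Context: A streaming algorithm over $\Sigma$ is a deterministic (possibly infinite-state) automaton with an injective encoding $\mathrm{enc}$ of its states into bit strings. Fix a symbol $a\in\Sigma$; for $w=a_1\cdots a_m$ and $n\ge0$, $\mathrm{last}_n(w)=a_{m-n+1}\cdots a_m$ if $n\le m$ and $a^{n-m}a_1\cdots a_m$ otherwise. A fixed-size sliding window algorithm for $L$ is a sequence $(\mathcal{A}_n)_{n\ge0}$ where $\mathcal{A}_n$ is a streaming algorithm accepting $\{w\in\Sigma^* : \mathrm{last}_n(w)\in L\}$; its space complexity at $n$ is the maximal encoding length of a state of $\mathcal{A}_n$. $\mathsf{F}(\mathcal{O}(1))$ is the class of languages having a fixed-size sliding window algorithm whose space complexity is bounded by a constant. $L$ is $k$-suffix testable if for all $x,y\in\Sigma^*$ and $z\in\Sigma^k$: $xz\in L\iff yz\in L$; suffix testable if $k$-suffix testable for some $k\ge0$. $L$ is a length language if for each $n$ either $\Sigma^n\subseteq L$ or $L\cap\Sigma^n=\emptyset$. *)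

theory Defs
  imports Main
begin

definition regular_lang :: "'a list set \<Rightarrow> bool" where
  "regular_lang L \<longleftrightarrow>
     (\<exists>(Q :: nat set) q0 (\<delta> :: nat \<Rightarrow> 'a \<Rightarrow> nat) F.
        finite Q \<and> q0 \<in> Q \<and> (\<forall>q\<in>Q. \<forall>x. \<delta> q x \<in> Q) \<and> F \<subseteq> Q \<and>
        L = {w. foldl \<delta> q0 w \<in> F})"

(* Since the state set injects into bit strings it is countable,
   so states are coded as natural numbers. *)
definition streaming_alg ::
  "nat set \<Rightarrow> nat \<Rightarrow> (nat \<Rightarrow> 'a \<Rightarrow> nat) \<Rightarrow> nat set \<Rightarrow> (nat \<Rightarrow> bool list) \<Rightarrow> bool" where
  "streaming_alg Q q0 \<delta> F enc \<longleftrightarrow>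
     q0 \<in> Q \<and> (\<forall>q\<in>Q. \<forall>x. \<delta> q x \<in> Q) \<and> F \<subseteq> Q \<and> inj_on enc Q"

definition sa_lang :: "nat \<Rightarrow> (nat \<Rightarrow> 'a \<Rightarrow> nat) \<Rightarrow> nat set \<Rightarrow> 'a list set" where
  "sa_lang q0 \<delta> F = {w. foldl \<delta> q0 w \<in> F}"

definition last_win :: "'a \<Rightarrow> nat \<Rightarrow> 'a list \<Rightarrow> 'a list" where
  "last_win a n w =
     (if n \<le> length w then drop (length w - n) w
      else replicate (n - length w) a @ w)"

(* L \<in> F(O(1)): there is a fixed-size sliding window algorithm (A_n)_n
   (A_n accepts {w. last_n(w) \<in> L}) whose space complexity (maximal encoding
   length of a state of A_n) is bounded by a constant c for all n. *)
definition F_O1 :: "'a \<Rightarrow> 'a list set \<Rightarrow> bool" where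
  "F_O1 a L \<longleftrightarrow>
     (\<exists>(Q :: nat \<Rightarrow> nat set) q0 (\<delta> :: nat \<Rightarrow> nat \<Rightarrow> 'a \<Rightarrow> nat) F enc (c :: nat).
        (\<forall>n. streaming_alg (Q n) (q0 n) (\<delta> n) (F n) (enc n) \<and>
             sa_lang (q0 n) (\<delta> n) (F n) = {w. last_win a n w \<in> L}) \<and>
        (\<forall>n. \<forall>q\<in>Q n. length (enc n q) \<le> c))"

definition k_suffix_testable :: "nat \<Rightarrow> 'a list set \<Rightarrow> bool" where
  "k_suffix_testable k L \<longleftrightarrow>
     (\<forall>x y z. length z = k \<longrightarrow> (x @ z \<in> L \<longleftrightarrow> y @ z \<in> L))"

definition suffix_testable :: "'a list set \<Rightarrow> bool" where
  "suffix_testable L \<longleftrightarrow> (\<exists>k. k_suffix_testable k L)"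

definition length_lang :: "'a list set \<Rightarrow> bool" where
  "length_lang L \<longleftrightarrow>
     (\<forall>n. {w. length w = n} \<subseteq> L \<or> L \<inter> {w. length w = n} = {})"

inductive_set bool_comb :: "'a list set set \<Rightarrow> 'a list set set" for B where
  base: "L \<in> B \<Longrightarrow> L \<in> bool_comb B"
| compl: "L \<in> bool_comb B \<Longrightarrow> - L \<in> bool_comb B"
| union: "L1 \<in> bool_comb B \<Longrightarrow> L2 \<in> bool_comb B \<Longrightarrow> L1 \<union> L2 \<in> bool_comb B"
| inter: "L1 \<in> bool_comb B \<Longrightarrow> L2 \<in> bool_comb B \<Longrightarrow> L1 \<inter> L2 \<in> bool_comb B"

end

theory Submission
  imports Defs "HOL-Library.Countable" "HOL-Library.Sublist"
begin

text \<open>If \<open>L\<close> is a Boolean combination of \<open>k\<close>-suffix testable languages and length languages,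
  whether \<open>last\<^sub>n(w) \<in> L\<close> depends only on the last \<open>min n k\<close> letters of \<open>w\<close>, so storing
  these letters is a constant-space sliding window algorithm. Conversely, constant space bounds
  the number of states of every \<open>A\<^sub>n\<close> by some \<open>N\<close>. The language of \<open>A\<^sub>n\<close> is \<open>n\<close>-suffix
  testable, and a suffix testable language accepted by an automaton with \<open>m\<close> reachable states is
  already \<open>m\<^sup>2\<close>-suffix testable: the pairs of states that agree on all words of length at least
  \<open>t\<close> form an increasing chain in \<open>t\<close> given by a recurrence, which becomes stationary after
  \<open>m\<^sup>2\<close> steps. Hence membership of a word in \<open>L\<close> depends only on its length and its last
  \<open>N\<^sup>2\<close> letters, which splits \<open>L\<close> into finitely many short words and finitely many sets
  \<open>\<Sigma>\<^sup>* s \<inter> T\<^sub>s\<close> with \<open>T\<^sub>s\<close> a regular length language.\<close>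

lemma length_last_win [simp]: "length (last_win a n w) = n"
  unfolding last_win_def by auto

lemma last_win_id: "length u = n \<Longrightarrow> last_win a n u = u"
  unfolding last_win_def by auto

lemma last_win_append_long: "n \<le> length v \<Longrightarrow> last_win a n (u @ v) = last_win a n v"
  unfolding last_win_def by auto

lemma last_win_last_win: "m \<le> n \<Longrightarrow> last_win a m (last_win a n w) = last_win a m w"
  unfolding last_win_def by (auto simp: drop_append)

lemma last_win_drop: "n \<le> length u \<Longrightarrow> last_win a n u = drop (length u - n) u"
  unfolding last_win_def by simp

lemma last_win_snoc: "last_win a n (w @ [x]) = (if n = 0 then [] else tl (last_win a n w) @ [x])"
  unfolding last_win_def by (auto simp: drop_append Suc_diff_le tl_drop drop_Suc)

lemma last_win_snoc_last_win: "last_win a n (last_win a n w @ [x]) = last_win a n (w @ [x])"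
  by (simp add: last_win_snoc last_win_id)

definition suffix_determined :: "'a \<Rightarrow> nat \<Rightarrow> 'a list set \<Rightarrow> bool" where
  "suffix_determined a K L \<longleftrightarrow>
     (\<forall>n w w'. last_win a (min n K) w = last_win a (min n K) w' \<longrightarrow>
        (last_win a n w \<in> L \<longleftrightarrow> last_win a n w' \<in> L))"

lemma suffix_determinedD:
  "suffix_determined a K L \<Longrightarrow> last_win a (min n K) w = last_win a (min n K) w' \<Longrightarrow>
     last_win a n w \<in> L \<longleftrightarrow> last_win a n w' \<in> L"
  unfolding suffix_determined_def by blast

lemma suffix_determined_mono:
  assumes "suffix_determined a K L" "K \<le> K'"
  shows "suffix_determined a K' L"
  unfolding suffix_determined_def
proof (intro allI impI)
  fix n w w'
  assume "last_win a (min n K') w = last_win a (min n K') w'"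
  then have "last_win a (min n K) w = last_win a (min n K) w'"
    using \<open>K \<le> K'\<close> by (metis last_win_last_win min.mono order_refl)
  then show "last_win a n w \<in> L \<longleftrightarrow> last_win a n w' \<in> L"
    by (rule suffix_determinedD[OF assms(1)])
qed

lemma suffix_determined_Compl: "suffix_determined a K L \<Longrightarrow> suffix_determined a K (- L)"
  unfolding suffix_determined_def by blast

lemma suffix_determined_Un:
  "suffix_determined a K L1 \<Longrightarrow> suffix_determined a K L2 \<Longrightarrow> suffix_determined a K (L1 \<union> L2)"
  unfolding suffix_determined_def by blast

lemma suffix_determined_Int:
  "suffix_determined a K L1 \<Longrightarrow> suffix_determined a K L2 \<Longrightarrow> suffix_determined a K (L1 \<inter> L2)"
  unfolding suffix_determined_def by blast

lemma bool_comb_suffix_determined: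
  assumes "L \<in> bool_comb B" and "\<And>L. L \<in> B \<Longrightarrow> \<exists>K. suffix_determined a K L"
  shows "\<exists>K. suffix_determined a K L"
  using assms(1)
proof induction
  case (base L)
  then show ?case by (rule assms(2))
next
  case (compl L)
  then show ?case by (meson suffix_determined_Compl)
next
  case (union L1 L2)
  then obtain K1 K2 where "suffix_determined a K1 L1" "suffix_determined a K2 L2" by blast
  then show ?case
    by (meson suffix_determined_Un suffix_determined_mono max.cobounded1 max.cobounded2)
next
  case (inter L1 L2)
  then obtain K1 K2 where "suffix_determined a K1 L1" "suffix_determined a K2 L2" by blast
  then show ?case
    by (meson suffix_determined_Int suffix_determined_mono max.cobounded1 max.cobounded2)
qed

lemma k_suffix_testable_suffix_determined:
  assumes "k_suffix_testable k L"
  shows "suffix_determined a k L"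
  unfolding suffix_determined_def
proof (intro allI impI)
  fix n w w'
  assume eq: "last_win a (min n k) w = last_win a (min n k) w'"
  show "last_win a n w \<in> L \<longleftrightarrow> last_win a n w' \<in> L"
  proof (cases "n \<le> k")
    case True
    then show ?thesis using eq by simp
  next
    case False
    let ?u = "last_win a n w" and ?v = "last_win a n w'"
    have "drop (n - k) ?u = last_win a k ?u"
      using False by (simp add: last_win_drop)
    also have "\<dots> = last_win a k ?v"
      using eq False by (simp add: last_win_last_win)
    also have "\<dots> = drop (n - k) ?v"
      using False by (simp add: last_win_drop)
    finally have "drop (n - k) ?u = drop (n - k) ?v" .
    moreover have "length (drop (n - k) ?u) = k" using False by simp
    ultimately show ?thesis
      using assms unfolding k_suffix_testable_def
      by (metis append_take_drop_id)
  qed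
qed

lemma length_lang_suffix_determined:
  assumes "length_lang L"
  shows "suffix_determined a 0 L"
proof -
  have "u \<in> L \<longleftrightarrow> v \<in> L" if "length u = length v" for u v
    using assms that unfolding length_lang_def by blast
  then show ?thesis unfolding suffix_determined_def by simp
qed

text \<open>The algorithm for window size \<open>n\<close> stores the last \<open>min n K\<close> letters, a word over a
  finite alphabet, coded by \<open>to_nat\<close>; the unary code of this number has bounded length.\<close>

lemma suffix_determined_F_O1:
  fixes a :: "'a::finite"
  assumes "suffix_determined a K L"
  shows "F_O1 a L"
proof -
  define S where "S = {u :: 'a list. length u \<le> K}"
  have "finite S"
    unfolding S_def using finite_lists_length_le[of "UNIV :: 'a set" K] by simp
  define Q where "Q = (\<lambda>n::nat. to_nat ` S)"
  define q0 where "q0 = (\<lambda>n. to_nat (last_win a (min n K) []))"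
  define \<delta> where "\<delta> = (\<lambda>n q x. to_nat (last_win a (min n K) (from_nat q @ [x])))"
  define F where "F = (\<lambda>n. {q \<in> Q n. last_win a n (from_nat q) \<in> L})"
  define enc where "enc = (\<lambda>(n::nat) (q::nat). replicate q True)"
  have run: "foldl (\<delta> n) (q0 n) w = to_nat (last_win a (min n K) w)" for n w
    by (induction w rule: rev_induct) (simp_all add: q0_def \<delta>_def last_win_snoc_last_win)
  have in_Q: "to_nat (last_win a (min n K) w) \<in> Q n" for n w
    unfolding Q_def S_def by simp
  have "streaming_alg (Q n) (q0 n) (\<delta> n) (F n) (enc n)" for n
    unfolding streaming_alg_def
    by (auto simp: q0_def \<delta>_def F_def enc_def in_Q intro: inj_onI)
  moreover have "sa_lang (q0 n) (\<delta> n) (F n) = {w. last_win a n w \<in> L}" for n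
  proof -
    have "last_win a n (last_win a (min n K) w) \<in> L \<longleftrightarrow> last_win a n w \<in> L" for w
      using assms by (rule suffix_determinedD) (simp add: last_win_id)
    then show ?thesis unfolding sa_lang_def run F_def using in_Q by simp
  qed
  moreover have "\<forall>n. \<forall>q\<in>Q n. length (enc n q) \<le> Max (to_nat ` S)"
    unfolding Q_def enc_def using \<open>finite S\<close> by simp
  ultimately show ?thesis unfolding F_O1_def by blast
qed

lemma foldl_in_closed: "q \<in> Q \<Longrightarrow> \<forall>p\<in>Q. \<forall>x. \<delta> p x \<in> Q \<Longrightarrow> foldl \<delta> q w \<in> Q"
  by (induction w arbitrary: q) auto

lemma k_suffix_testable_mono:
  assumes "k_suffix_testable k L" "k \<le> k'"
  shows "k_suffix_testable k' L"
  unfolding k_suffix_testable_def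
proof (intro allI impI)
  fix x y z :: "'a list"
  assume "length z = k'"
  then have "length (drop (k' - k) z) = k" using assms(2) by simp
  then show "x @ z \<in> L \<longleftrightarrow> y @ z \<in> L"
    using assms(1) unfolding k_suffix_testable_def by (metis append.assoc append_take_drop_id)
qed

lemma k_suffix_testable_last_win: "k_suffix_testable n {w. last_win a n w \<in> L}"
  unfolding k_suffix_testable_def by (simp add: last_win_append_long)

definition agree_beyond :: "('q \<Rightarrow> 'a \<Rightarrow> 'q) \<Rightarrow> 'q set \<Rightarrow> nat \<Rightarrow> 'q \<Rightarrow> 'q \<Rightarrow> bool" where
  "agree_beyond \<delta> F t p q \<longleftrightarrow> (\<forall>z. t \<le> length z \<longrightarrow> (foldl \<delta> p z \<in> F \<longleftrightarrow> foldl \<delta> q z \<in> F))"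

lemma agree_beyond_mono: "agree_beyond \<delta> F t p q \<Longrightarrow> t \<le> t' \<Longrightarrow> agree_beyond \<delta> F t' p q"
  unfolding agree_beyond_def by simp

lemma agree_beyond_Suc_iff:
  fixes \<delta> :: "'q \<Rightarrow> 'a \<Rightarrow> 'q"
  shows "agree_beyond \<delta> F (Suc t) p q \<longleftrightarrow> (\<forall>x. agree_beyond \<delta> F t (\<delta> p x) (\<delta> q x))"
proof
  assume H: "agree_beyond \<delta> F (Suc t) p q"
  show "\<forall>x. agree_beyond \<delta> F t (\<delta> p x) (\<delta> q x)"
    unfolding agree_beyond_def
  proof (intro allI impI)
    fix x :: 'a and z :: "'a list"
    assume "t \<le> length z"
    then show "foldl \<delta> (\<delta> p x) z \<in> F \<longleftrightarrow> foldl \<delta> (\<delta> q x) z \<in> F"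
      using H unfolding agree_beyond_def by (metis Suc_le_mono foldl_Cons length_Cons)
  qed
next
  assume H: "\<forall>x. agree_beyond \<delta> F t (\<delta> p x) (\<delta> q x)"
  show "agree_beyond \<delta> F (Suc t) p q"
    unfolding agree_beyond_def
  proof (intro allI impI)
    fix z :: "'a list"
    assume "Suc t \<le> length z"
    then obtain x z' where "z = x # z'" "t \<le> length z'" by (cases z) auto
    then show "foldl \<delta> p z \<in> F \<longleftrightarrow> foldl \<delta> q z \<in> F"
      using H unfolding agree_beyond_def by simp
  qed
qed

lemma k_suffix_testable_iff_agree_beyond:
  "k_suffix_testable k {w. foldl \<delta> q0 w \<in> F} \<longleftrightarrow>
     (\<forall>x y. agree_beyond \<delta> F k (foldl \<delta> q0 x) (foldl \<delta> q0 y))"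
proof
  assume suffix: "k_suffix_testable k {w. foldl \<delta> q0 w \<in> F}"
  show "\<forall>x y. agree_beyond \<delta> F k (foldl \<delta> q0 x) (foldl \<delta> q0 y)"
    unfolding agree_beyond_def
  proof (intro allI impI)
    fix x y z :: "'a list"
    assume "k \<le> length z"
    then obtain z1 z2 where "z = z1 @ z2" "length z2 = k"
      by (metis append_take_drop_id diff_diff_cancel length_drop)
    then show "foldl \<delta> (foldl \<delta> q0 x) z \<in> F \<longleftrightarrow> foldl \<delta> (foldl \<delta> q0 y) z \<in> F"
      using suffix unfolding k_suffix_testable_def
      by (metis (no_types, lifting) append.assoc foldl_append mem_Collect_eq)
  qed
qed (simp add: k_suffix_testable_def agree_beyond_def)

lemma mono_chain_stationary:
  fixes E :: "nat \<Rightarrow> 'b set"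
  assumes "finite S" and "\<And>t. E t \<subseteq> S" and "\<And>t. E t \<subseteq> E (Suc t)"
  shows "\<exists>t \<le> card S. E (Suc t) = E t"
proof (rule ccontr)
  assume "\<not> ?thesis"
  then have strict: "E t \<subset> E (Suc t)" if "t \<le> card S" for t
    using assms(3) that by blast
  have "t \<le> card (E t)" if "t \<le> Suc (card S)" for t
    using that
  proof (induction t)
    case (Suc t)
    have "card (E t) < card (E (Suc t))"
      using Suc.prems strict finite_subset[OF assms(2,1)] by (simp add: psubset_card_mono)
    then show ?case using Suc by simp
  qed simp
  from this[of "Suc (card S)"] show False
    using card_mono[OF assms(1) assms(2)[of "Suc (card S)"]] by simp
qed

lemma stationary_recurrence:
  assumes "\<And>t. E (Suc t) = f (E t)" and "E (Suc t) = E t" and "t \<le> j"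
  shows "E j = E t"
  using assms(3)
proof (induction j rule: dec_induct)
  case (step j)
  have "E (Suc j) = f (E j)" by (rule assms(1))
  also have "\<dots> = f (E t)" using step.IH by simp
  also have "\<dots> = E t" using assms(1)[of t] assms(2) by simp
  finally show ?case .
qed simp

lemma k_suffix_testable_card_reachable:
  fixes \<delta> :: "'q \<Rightarrow> 'a \<Rightarrow> 'q" and q0 :: 'q
  defines "R \<equiv> range (foldl \<delta> q0)"
  assumes "finite R" and "k_suffix_testable n {w. foldl \<delta> q0 w \<in> F}"
  shows "k_suffix_testable (card R ^ 2) {w. foldl \<delta> q0 w \<in> F}"
proof -
  define E where "E t = {(p, q) \<in> R \<times> R. agree_beyond \<delta> F t p q}" for t
  have closed: "\<delta> p x \<in> R" if "p \<in> R" for p x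
  proof -
    from that obtain w where "p = foldl \<delta> q0 w" unfolding R_def by blast
    then have "\<delta> p x = foldl \<delta> q0 (w @ [x])" by simp
    then show ?thesis unfolding R_def by blast
  qed
  have E_Suc: "E (Suc t) = {(p, q) \<in> R \<times> R. \<forall>x. (\<delta> p x, \<delta> q x) \<in> E t}" for t
    unfolding E_def agree_beyond_Suc_iff using closed by auto
  have E_mono: "E t \<subseteq> E t'" if "t \<le> t'" for t t'
    using agree_beyond_mono[OF _ that] unfolding E_def by auto
  have "\<exists>t \<le> card (R \<times> R). E (Suc t) = E t"
  proof (rule mono_chain_stationary)
    show "finite (R \<times> R)" using \<open>finite R\<close> by simp
    show "E t \<subseteq> R \<times> R" for t unfolding E_def by auto
    show "E t \<subseteq> E (Suc t)" for t by (rule E_mono) simp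
  qed
  moreover have "card (R \<times> R) = card R ^ 2"
    by (simp add: card_cartesian_product power2_eq_square)
  ultimately obtain t where t: "t \<le> card R ^ 2" "E (Suc t) = E t"
    by metis
  have "E n = R \<times> R"
    using assms(3) unfolding E_def R_def k_suffix_testable_iff_agree_beyond by auto
  moreover have "E (max n t) = E t"
    by (rule stationary_recurrence[OF E_Suc t(2)]) simp
  moreover have "E (card R ^ 2) = E t"
    by (rule stationary_recurrence[OF E_Suc t(2) t(1)])
  ultimately have "E (card R ^ 2) = R \<times> R"
    using E_mono[of n "max n t"] unfolding E_def by auto
  then have "agree_beyond \<delta> F (card R ^ 2) p q" if "p \<in> R" "q \<in> R" for p q
    using that unfolding E_def by blast
  then show ?thesis
    unfolding k_suffix_testable_iff_agree_beyond R_def by blast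
qed

definition k_suffix_testable_per_length :: "nat \<Rightarrow> 'a list set \<Rightarrow> bool" where
  "k_suffix_testable_per_length k L \<longleftrightarrow>
     (\<forall>x y z. length x = length y \<longrightarrow> length z = k \<longrightarrow> (x @ z \<in> L \<longleftrightarrow> y @ z \<in> L))"

lemma card_le_bounded_encoding:
  fixes enc :: "'q \<Rightarrow> bool list"
  assumes "inj_on enc Q" and "\<forall>q\<in>Q. length (enc q) \<le> c"
  shows "finite Q \<and> card Q \<le> card {bs :: bool list. length bs \<le> c}"
proof -
  have fin: "finite {bs :: bool list. length bs \<le> c}"
    using finite_lists_length_le[of "UNIV :: bool set" c] by simp
  have "enc ` Q \<subseteq> {bs. length bs \<le> c}" using assms(2) by blast
  then show ?thesis
    using inj_on_finite[OF assms(1) _ fin] card_inj_on_le[OF assms(1) _ fin] by blast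
qed

lemma streaming_alg_k_suffix_testable_bound:
  fixes enc :: "nat \<Rightarrow> bool list"
  assumes alg: "streaming_alg Q q0 \<delta> F enc" and space: "\<forall>q\<in>Q. length (enc q) \<le> c"
    and "k_suffix_testable n (sa_lang q0 \<delta> F)"
  shows "k_suffix_testable (card {bs :: bool list. length bs \<le> c} ^ 2) (sa_lang q0 \<delta> F)"
proof -
  let ?R = "range (foldl \<delta> q0)"
  have run_closed: "q0 \<in> Q" "\<forall>q\<in>Q. \<forall>x. \<delta> q x \<in> Q" and "inj_on enc Q"
    using alg unfolding streaming_alg_def by blast+
  have reach: "?R \<subseteq> Q"
    using foldl_in_closed[OF run_closed] by blast
  have Q_bound: "finite Q \<and> card Q \<le> card {bs :: bool list. length bs \<le> c}"
    using \<open>inj_on enc Q\<close> space by (rule card_le_bounded_encoding)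
  then have "finite ?R" "card ?R \<le> card {bs :: bool list. length bs \<le> c}"
    using finite_subset[OF reach] card_mono[OF _ reach] by (blast, linarith)
  have "k_suffix_testable (card ?R ^ 2) (sa_lang q0 \<delta> F)"
    using k_suffix_testable_card_reachable[OF \<open>finite ?R\<close>] assms(3)
    unfolding sa_lang_def by blast
  then show ?thesis
    by (rule k_suffix_testable_mono) (simp add: power_mono \<open>card ?R \<le> _\<close>)
qed

lemma F_O1_k_suffix_testable_per_length:
  assumes "F_O1 a L"
  shows "\<exists>k. k_suffix_testable_per_length k L"
proof -
  obtain Q q0 \<delta> F enc c where
    alg: "\<And>n. streaming_alg (Q n) (q0 n) (\<delta> n) (F n) (enc n)" and
    lang: "\<And>n. sa_lang (q0 n) (\<delta> n) (F n) = {w. last_win a n w \<in> L}" and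
    space: "\<And>n. \<forall>q\<in>Q n. length (enc n q) \<le> (c :: nat)"
    using assms unfolding F_O1_def by blast
  define k where "k = card {bs :: bool list. length bs \<le> c} ^ 2"
  have window: "k_suffix_testable k {w. last_win a n w \<in> L}" for n
    using streaming_alg_k_suffix_testable_bound[OF alg space, of n n]
    unfolding lang k_def by (simp add: k_suffix_testable_last_win)
  have "x @ z \<in> L \<longleftrightarrow> y @ z \<in> L" if "length x = length y" "length z = k" for x y z :: "'a list"
  proof -
    have "last_win a (length x + k) (x @ z) \<in> L \<longleftrightarrow> last_win a (length x + k) (y @ z) \<in> L"
      using window \<open>length z = k\<close> unfolding k_suffix_testable_def by blast
    then show ?thesis using that by (simp add: last_win_id)
  qed
  then show ?thesis unfolding k_suffix_testable_per_length_def by blast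
qed

lemma regular_langI:
  fixes Q :: "'q::countable set" and \<delta> :: "'q \<Rightarrow> 'a \<Rightarrow> 'q"
  assumes "finite Q" and "q0 \<in> Q" and closed: "\<forall>q\<in>Q. \<forall>x. \<delta> q x \<in> Q" and "F \<subseteq> Q"
  shows "regular_lang {w. foldl \<delta> q0 w \<in> F}"
proof -
  define \<delta>' where "\<delta>' = (\<lambda>n x. to_nat (\<delta> (from_nat n) x))"
  have run: "foldl \<delta>' (to_nat q) w = to_nat (foldl \<delta> q w)" if "q \<in> Q" for q w
    using that
  proof (induction w arbitrary: q)
    case (Cons x w)
    then show ?case using closed by (simp add: \<delta>'_def)
  qed simp
  show ?thesis
    unfolding regular_lang_def
  proof (intro exI conjI)
    show "finite (to_nat ` Q)" using \<open>finite Q\<close> by (rule finite_imageI)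
    show "to_nat q0 \<in> to_nat ` Q" using \<open>q0 \<in> Q\<close> by (rule imageI)
    show "\<forall>q\<in>to_nat ` Q. \<forall>x. \<delta>' q x \<in> to_nat ` Q"
      using closed by (auto simp: \<delta>'_def)
    show "to_nat ` F \<subseteq> to_nat ` Q" using \<open>F \<subseteq> Q\<close> by (rule image_mono)
    show "{w. foldl \<delta> q0 w \<in> F} = {w. foldl \<delta>' (to_nat q0) w \<in> to_nat ` F}"
      using run[OF \<open>q0 \<in> Q\<close>] by (simp add: inj_image_mem_iff)
  qed
qed

lemma regular_lang_length_eq: "regular_lang {w :: 'a list. length w = m}"
proof -
  define \<delta> where "\<delta> = (\<lambda>(i::nat) (x::'a). min (Suc i) (Suc m))"
  have "foldl \<delta> 0 w = min (length w) (Suc m)" for w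
    by (induction w rule: rev_induct) (simp_all add: \<delta>_def)
  then have "{w :: 'a list. length w = m} = {w. foldl \<delta> 0 w \<in> {m}}" by auto
  moreover have "regular_lang {w. foldl \<delta> 0 w \<in> {m}}"
    by (rule regular_langI[where Q = "{0..Suc m}"]) (auto simp: \<delta>_def)
  ultimately show ?thesis by simp
qed

text \<open>The automaton counts the first \<open>k\<close> letters and then runs the automaton of \<open>L\<close> on one
  letter \<open>a\<close> per further input letter; it accepts if the suffix \<open>s\<close> leads into a final state.\<close>

lemma regular_lang_padded_suffix:
  fixes L :: "'a list set"
  assumes "regular_lang L"
  shows "regular_lang {w :: 'a list. k \<le> length w \<and> replicate (length w - k) a @ s \<in> L}"
proof -
  obtain Q q0 \<delta> F where Q: "finite (Q :: nat set)" "q0 \<in> Q" "\<forall>q\<in>Q. \<forall>x. \<delta> q x \<in> Q" "F \<subseteq> Q"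
    and L: "L = {w. foldl \<delta> q0 w \<in> F}"
    using assms unfolding regular_lang_def by blast
  define \<delta>' where "\<delta>' = (\<lambda>(i, q) (x :: 'a). if i < k then (Suc i, q) else (k, \<delta> q a))"
  define F' where "F' = {(i, q). i = k \<and> q \<in> Q \<and> foldl \<delta> q s \<in> F}"
  have run: "foldl \<delta>' (0, q0) w = (min (length w) k, foldl \<delta> q0 (replicate (length w - k) a))"
    for w
  proof (induction w rule: rev_induct)
    case (snoc x w)
    have "replicate (Suc j) a = replicate j a @ [a]" for j
      by (simp add: replicate_append_same)
    with snoc show ?case
      by (cases "length w < k") (simp_all add: \<delta>'_def Suc_diff_le del: replicate_Suc)
  qed simp
  have "{w :: 'a list. k \<le> length w \<and> replicate (length w - k) a @ s \<in> L} =
        {w. foldl \<delta>' (0, q0) w \<in> F'}"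
    unfolding L F'_def run using foldl_in_closed[OF Q(2,3)] by auto
  moreover have "regular_lang {w. foldl \<delta>' (0, q0) w \<in> F'}"
  proof (rule regular_langI[where Q = "{0..k} \<times> Q"])
    show "\<forall>p\<in>{0..k} \<times> Q. \<forall>x. \<delta>' p x \<in> {0..k} \<times> Q"
      using Q(3) by (auto simp: \<delta>'_def)
  qed (auto simp: F'_def Q(1,2))
  ultimately show ?thesis by simp
qed

abbreviation suffix_or_length_langs :: "'a list set set" where
  "suffix_or_length_langs \<equiv> {K. suffix_testable K} \<union> {K. regular_lang K \<and> length_lang K}"

lemma suffix_testable_suffix: "suffix_testable {w. suffix s w}"
proof -
  have "suffix s (x @ z) \<longleftrightarrow> z = s" if "length z = length s" for x z :: "'a list"
  proof
    assume "suffix s (x @ z)"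
    then obtain y where "x @ z = y @ s" by (auto simp: suffix_def)
    with that show "z = s" by (simp add: append_eq_append_conv)
  qed (auto intro: suffixI)
  then have "k_suffix_testable (length s) {w. suffix s w}"
    unfolding k_suffix_testable_def by simp
  then show ?thesis unfolding suffix_testable_def by blast
qed

lemma length_lang_length_eq: "length_lang {w. length w = m}"
  unfolding length_lang_def by auto

lemma length_lang_padded_suffix:
  "length_lang {w. k \<le> length w \<and> replicate (length w - k) a @ s \<in> L}"
  unfolding length_lang_def by auto

lemma bool_comb_UN:
  assumes "finite I" and "\<And>i. i \<in> I \<Longrightarrow> f i \<in> bool_comb B" and "{} \<in> bool_comb B"
  shows "(\<Union>i\<in>I. f i) \<in> bool_comb B"
  using assms by (induction I rule: finite_induct) (simp_all add: bool_comb.union)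

text \<open>The first union consists of the singletons \<open>{u}\<close>, \<open>u \<in> L\<close> short.\<close>

lemma k_suffix_testable_per_length_decomposition:
  assumes "k_suffix_testable_per_length k L"
  shows "L = (\<Union>u\<in>{u \<in> L. length u < k}. {w. suffix u w} \<inter> {w. length w = length u}) \<union>
             (\<Union>s\<in>{s. length s = k}.
                {w. suffix s w} \<inter> {w. k \<le> length w \<and> replicate (length w - k) a @ s \<in> L})"
    (is "L = ?Short \<union> ?Long")
proof (intro set_eqI iffI)
  fix w
  assume "w \<in> L"
  show "w \<in> ?Short \<union> ?Long"
  proof (cases "length w < k")
    case True
    then show ?thesis using \<open>w \<in> L\<close> by (intro UnI1 UN_I[of w]) auto
  next
    case False
    define s where "s = drop (length w - k) w"
    define x where "x = take (length w - k) w"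
    have "length s = k" "w = x @ s" "length x = length (replicate (length w - k) a)"
      using False by (simp_all add: s_def x_def)
    then have "replicate (length w - k) a @ s \<in> L"
      using \<open>w \<in> L\<close> assms unfolding k_suffix_testable_per_length_def by blast
    moreover have "suffix s w" unfolding s_def by (rule suffix_drop)
    ultimately show ?thesis
      using False \<open>length s = k\<close> by (intro UnI2 UN_I[of s]) auto
  qed
next
  fix w
  assume "w \<in> ?Short \<union> ?Long"
  then show "w \<in> L"
  proof
    assume "w \<in> ?Short"
    then show "w \<in> L"
      by (auto dest: suffix_take)
  next
    assume "w \<in> ?Long"
    then obtain s x where "length s = k" "w = x @ s"
      and "replicate (length w - k) a @ s \<in> L"
      by (auto elim: suffixE)
    moreover have "length (replicate (length w - k) a) = length x"
      using \<open>length s = k\<close> \<open>w = x @ s\<close> by simp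
    ultimately show "w \<in> L"
      using assms unfolding k_suffix_testable_per_length_def by blast
  qed
qed

lemma regular_k_suffix_testable_per_length_bool_comb:
  fixes L :: "'a::finite list set"
  assumes "regular_lang L" and "k_suffix_testable_per_length k L"
  shows "L \<in> bool_comb suffix_or_length_langs"
proof -
  have empty: "{} \<in> bool_comb suffix_or_length_langs"
    by (rule bool_comb.base) (simp add: suffix_testable_def k_suffix_testable_def)
  have suffix: "{w. suffix s w} \<in> bool_comb suffix_or_length_langs" for s :: "'a list"
    by (rule bool_comb.base) (simp add: suffix_testable_suffix)
  have "finite {u :: 'a list. length u \<le> k}"
    using finite_lists_length_le[OF finite_UNIV, of k] by simp
  then have "finite {u \<in> L. length u < k}"
    by (rule rev_finite_subset) auto
  then have "(\<Union>u\<in>{u \<in> L. length u < k}. {w. suffix u w} \<inter> {w. length w = length u})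
      \<in> bool_comb suffix_or_length_langs"
    by (intro bool_comb_UN empty bool_comb.inter suffix bool_comb.base)
      (simp_all add: regular_lang_length_eq length_lang_length_eq)
  moreover have "finite {s :: 'a list. length s = k}"
    using finite_lists_length_eq[OF finite_UNIV, of k] by simp
  \<comment> \<open>any padding letter will do\<close>
  then have "(\<Union>s\<in>{s. length s = k}. {w. suffix s w} \<inter>
        {w. k \<le> length w \<and> replicate (length w - k) undefined @ s \<in> L})
      \<in> bool_comb suffix_or_length_langs"
    by (intro bool_comb_UN empty bool_comb.inter suffix bool_comb.base)
      (simp_all add: regular_lang_padded_suffix[OF assms(1)] length_lang_padded_suffix)
  ultimately show ?thesis
    by (subst k_suffix_testable_per_length_decomposition[OF assms(2)]) (rule bool_comb.union)
qed

lemma suffix_or_length_lang_suffix_determined: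
  assumes "L \<in> suffix_or_length_langs"
  shows "\<exists>K. suffix_determined a K L"
  using assms
proof
  assume "L \<in> {K. suffix_testable K}"
  then obtain k where "k_suffix_testable k L" by (auto simp: suffix_testable_def)
  then show ?thesis by (blast intro: k_suffix_testable_suffix_determined)
next
  assume "L \<in> {K. regular_lang K \<and> length_lang K}"
  then show ?thesis by (blast intro: length_lang_suffix_determined)
qed

theorem theorem6p1:
  fixes a :: "'a::finite" and L :: "'a list set"
  assumes "regular_lang L"
  shows "F_O1 a L \<longleftrightarrow>
    L \<in> bool_comb ({K. suffix_testable K} \<union> {K. regular_lang K \<and> length_lang K})"
proof
  assume "F_O1 a L"
  then obtain k where "k_suffix_testable_per_length k L"
    by (blast dest: F_O1_k_suffix_testable_per_length)
  with assms show "L \<in> bool_comb ({K. suffix_testable K} \<union> {K. regular_lang K \<and> length_lang K})"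
    by (rule regular_k_suffix_testable_per_length_bool_comb)
next
  assume "L \<in> bool_comb ({K. suffix_testable K} \<union> {K. regular_lang K \<and> length_lang K})"
  then have "\<exists>K. suffix_determined a K L"
    by (rule bool_comb_suffix_determined) (rule suffix_or_length_lang_suffix_determined)
  then obtain K where "suffix_determined a K L" ..
  then show "F_O1 a L" by (rule suffix_determined_F_O1)
qed

end
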